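(* Let $N\geq1$, $\delta=T/N$. Let $v_h^0$ be the greatest $v\in\mathcal W_h$ with $v\leq\phi$, and for $t=0,\delta,\dots,T-\delta$ let $v_h^{t+\delta}$ be the greatest $v\in\mathcal W_h$ with $\langle z_j,v\rangle\leq\langle z_j,S^\delta v_h^t\rangle$ for all $1\leq j\leq q$. Then for every $t\in\{0,\delta,\dots,T\}$ there exists a greatest $\lambda^t\in\overline{\mathbb{R}}^p$ with $v_h^t=W_h\lambda^t$, and these vectors satisfy $\lambda^0=W_h\backslash\phi$ and, for $t=0,\dots,T-\delta$ and $1\leq i\leq p$, \[ \lambda^{t+\delta}_i=\min_{1\leq j\leq q}\Big(\langle z_j,w_i\rangle\backslash\langle z_j,S^\delta(W_h\lambda^t)\rangle\Big). \]
   Context: $X\subseteq\mathbb{R}^n$, $U\subseteq\mathbb{R}^m$, $\ell:X\times U\to\mathbb R$, $f:X\times U\to\mathbb{R}^n$, $T>0$, $\phi:X\to\mathbb{R}\cup\{-\infty\}$; $S^\delta g(x)=\sup\{\int_0^\delta\ell(\mathbf x(s),\mathbf u(s))ds+g(\mathbf x(\delta))\}$ over measurable $\mathbf u:[0,\delta]\to U$ and absolutely continuous $\mathbf x:[0,\delta]\to X$ with $\dot{\mathbf x}=f(\mathbf x,\mathbf u)$ a.e., $\mathbf x(0)=x$. Arithmetic in $\overline{\mathbb R}=\mathbb{R}\cup\{\pm\infty\}$ with $-\infty$ absorbing for $+$; $a\backslash b=\max\{\lambda\in\overline{\mathbb{R}}:a+\lambda\leq b\}$. Finite elements $w_1,\dots,w_p$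 and test functions $z_1,\dots,z_q$ are functions $X\to\mathbb{R}\cup\{-\infty\}$. $\langle u,v\rangle=\sup_{x\in X}(u(x)+v(x))$; $W_h\lambda=\sup_i(w_i+\lambda_i)$; $\mathcal W_h=\{W_h\lambda:\lambda\in\overline{\mathbb R}^p\}$; $(W_h\backslash g)_i=\inf_{x\in X}(w_i(x)\backslash g(x))$. Functions are ordered pointwise. *)

theory Defs
  imports "HOL-Analysis.Analysis" "HOL-Library.Extended_Real"
begin

definition madd :: "ereal \<Rightarrow> ereal \<Rightarrow> ereal" where
  "madd a b = (if a = -\<infinity> \<or> b = -\<infinity> then -\<infinity> else a + b)"

definition resid :: "ereal \<Rightarrow> ereal \<Rightarrow> ereal" where
  "resid a b = (GREATEST l. madd a l \<le> b)"

definition abs_cont_on :: "real \<Rightarrow> real \<Rightarrow> (real \<Rightarrow> 'v::real_normed_vector) \<Rightarrow> bool" where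
  "abs_cont_on a b y \<longleftrightarrow>
     (\<forall>e>0. \<exists>d>0. \<forall>(n::nat) (s::nat \<Rightarrow> real) (t::nat \<Rightarrow> real).
        (\<forall>k<n. a \<le> s k \<and> s k \<le> t k \<and> t k \<le> b)
        \<and> (\<forall>i<n. \<forall>j<n. i \<noteq> j \<longrightarrow> t i \<le> s j \<or> t j \<le> s i)
        \<and> (\<Sum>k<n. t k - s k) < d
        \<longrightarrow> (\<Sum>k<n. norm (y (t k) - y (s k))) < e)"

definition admissible ::
  "('n::euclidean_space) set \<Rightarrow> ('m::euclidean_space) set \<Rightarrow> ('n \<Rightarrow> 'm \<Rightarrow> 'n)
   \<Rightarrow> ('n \<Rightarrow> 'm \<Rightarrow> real) \<Rightarrow> real \<Rightarrow> 'n \<Rightarrow> (real \<Rightarrow> 'm) \<Rightarrow> (real \<Rightarrow> 'n) \<Rightarrow> bool" where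
  "admissible X U f l \<delta> x u y \<longleftrightarrow>
     u \<in> borel_measurable (restrict_space lborel {0..\<delta>})
     \<and> (\<forall>s\<in>{0..\<delta>}. u s \<in> U)
     \<and> abs_cont_on 0 \<delta> y
     \<and> (\<forall>s\<in>{0..\<delta>}. y s \<in> X)
     \<and> (AE s in lborel. s \<in> {0..\<delta>} \<longrightarrow> (y has_vector_derivative f (y s) (u s)) (at s within {0..\<delta>}))
     \<and> y 0 = x
     \<and> set_integrable lborel {0..\<delta>} (\<lambda>s. l (y s) (u s))"

definition Ssg ::
  "('n::euclidean_space) set \<Rightarrow> ('m::euclidean_space) set \<Rightarrow> ('n \<Rightarrow> 'm \<Rightarrow> 'n)
   \<Rightarrow> ('n \<Rightarrow> 'm \<Rightarrow> real) \<Rightarrow> real \<Rightarrow> ('n \<Rightarrow> ereal) \<Rightarrow> 'n \<Rightarrow> ereal" where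
  "Ssg X U f l \<delta> g x = Sup {ereal (LINT s:{0..\<delta>}|lborel. l (y s) (u s)) + g (y \<delta>) | u y.
        admissible X U f l \<delta> x u y}"

definition pairing :: "'n set \<Rightarrow> ('n \<Rightarrow> ereal) \<Rightarrow> ('n \<Rightarrow> ereal) \<Rightarrow> ereal" where
  "pairing X u v = (SUP x\<in>X. madd (u x) (v x))"

definition Wh :: "('p \<Rightarrow> 'n \<Rightarrow> ereal) \<Rightarrow> ('p \<Rightarrow> ereal) \<Rightarrow> 'n \<Rightarrow> ereal" where
  "Wh w lam x = (SUP i. madd (w i x) (lam i))"

definition Wspace :: "('p \<Rightarrow> 'n \<Rightarrow> ereal) \<Rightarrow> ('n \<Rightarrow> ereal) set" where
  "Wspace w = range (Wh w)"

definition Wres :: "'n set \<Rightarrow> ('p \<Rightarrow> 'n \<Rightarrow> ereal) \<Rightarrow> ('n \<Rightarrow> ereal) \<Rightarrow> 'p \<Rightarrow> ereal" where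
  "Wres X w g i = (INF x\<in>X. resid (w i x) (g x))"

end

theory Submission
  imports Defs
begin

text \<open>
  Max-plus addition is residuated, and so are \<open>W\<^sub>h\<close> and the pairings with the test
  functions: \<open>W\<^sub>h \<lambda> \<le> g\<close> iff \<open>\<lambda> \<le> W\<^sub>h \ g\<close>, and \<open>\<langle>z\<^sub>j, W\<^sub>h \<lambda>\<rangle> \<le> c\<^sub>j\<close> for all \<open>j\<close>
  iff \<open>\<lambda>\<^sub>i \<le> min\<^sub>j (\<langle>z\<^sub>j, w\<^sub>i\<rangle> \ c\<^sub>j)\<close> for all \<open>i\<close>.  Hence each constraint defining \<open>v\<^sub>h\<^sup>t\<close>,
  pulled back along \<open>W\<^sub>h\<close>, cuts out a principal down-set \<open>{\<lambda>. \<lambda> \<le> \<mu>}\<close> of coefficient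
  vectors; then \<open>W\<^sub>h \<mu>\<close> is the greatest admissible function in the range of \<open>W\<^sub>h\<close>, and \<open>\<mu>\<close>
  is the greatest coefficient vector representing it.  No property of \<open>S\<^sup>\<delta>\<close> is used.
\<close>

lemma madd_commute: "madd a b = madd b a"
  unfolding madd_def by (auto simp: add.commute)

lemma madd_assoc: "madd (madd a b) c = madd a (madd b c)"
  unfolding madd_def by (auto simp: add.assoc)

lemma madd_mono: "a \<le> a' \<Longrightarrow> b \<le> b' \<Longrightarrow> madd a b \<le> madd a' b'"
  unfolding madd_def by (auto intro: add_mono)

lemma madd_residuated: "\<exists>g. \<forall>l. madd a l \<le> b \<longleftrightarrow> l \<le> g"
proof (cases a)
  case (real r)
  show ?thesis
  proof (intro exI allI)
    fix l show "madd a l \<le> b \<longleftrightarrow> l \<le> b - a"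
      using real by (cases b; cases l) (auto simp: madd_def add.commute le_diff_eq)
  qed
next
  case PInf
  show ?thesis
  proof (intro exI allI)
    fix l show "madd a l \<le> b \<longleftrightarrow> l \<le> (if b = \<infinity> then \<infinity> else -\<infinity>)"
      using PInf by (cases b; cases l) (auto simp: madd_def)
  qed
next
  case MInf
  then show ?thesis by (intro exI[of _ \<infinity>]) (auto simp: madd_def)
qed

lemma madd_le_iff_le_resid: "madd a l \<le> b \<longleftrightarrow> l \<le> resid a b"
proof -
  obtain g where g: "\<And>l. madd a l \<le> b \<longleftrightarrow> l \<le> g"
    using madd_residuated by blast
  have "resid a b = g"
    unfolding resid_def by (rule Greatest_equality) (use g in auto)
  with g show ?thesis by simp
qed

lemma madd_SUP_le_iff: "madd a (SUP i\<in>I. b i) \<le> c \<longleftrightarrow> (\<forall>i\<in>I. madd a (b i) \<le> c)"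
  by (simp add: madd_le_iff_le_resid SUP_le_iff)

lemma SUP_madd_le_iff: "madd (SUP i\<in>I. b i) a \<le> c \<longleftrightarrow> (\<forall>i\<in>I. madd (b i) a \<le> c)"
  by (simp add: madd_commute[of _ a] madd_SUP_le_iff)

lemma Wh_mono: "lam \<le> mu \<Longrightarrow> Wh w lam \<le> Wh w mu"
  unfolding Wh_def le_fun_def by (auto intro!: SUP_mono madd_mono)

lemma Wh_le_iff_le_Wres:
  assumes "\<forall>i x. x \<notin> X \<longrightarrow> w i x = -\<infinity>"
  shows "Wh w lam \<le> g \<longleftrightarrow> lam \<le> Wres X w g"
proof -
  have "Wh w lam \<le> g \<longleftrightarrow> (\<forall>x i. madd (w i x) (lam i) \<le> g x)"
    unfolding Wh_def le_fun_def by (simp add: SUP_le_iff)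
  also have "\<dots> \<longleftrightarrow> (\<forall>x\<in>X. \<forall>i. madd (w i x) (lam i) \<le> g x)"
    using assms by (auto simp: madd_def)
  also have "\<dots> \<longleftrightarrow> lam \<le> Wres X w g"
    unfolding Wres_def le_fun_def by (auto simp: le_INF_iff madd_le_iff_le_resid)
  finally show ?thesis .
qed

lemma pairing_Wh_le_iff:
  "pairing X z (Wh w lam) \<le> c \<longleftrightarrow> (\<forall>i. lam i \<le> resid (pairing X z (w i)) c)"
proof -
  have "pairing X z (Wh w lam) \<le> c \<longleftrightarrow> (\<forall>x\<in>X. \<forall>i. madd (madd (z x) (w i x)) (lam i) \<le> c)"
    unfolding pairing_def Wh_def by (simp add: SUP_le_iff madd_SUP_le_iff madd_assoc)
  also have "\<dots> \<longleftrightarrow> (\<forall>i. madd (pairing X z (w i)) (lam i) \<le> c)"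
    unfolding pairing_def by (auto simp: SUP_madd_le_iff)
  finally show ?thesis by (simp add: madd_le_iff_le_resid)
qed

lemma pairings_Wh_le_iff:
  fixes z :: "'q::finite \<Rightarrow> 'n \<Rightarrow> ereal"
  shows "(\<forall>j. pairing X (z j) (Wh w lam) \<le> c j) \<longleftrightarrow>
    lam \<le> (\<lambda>i. Min (range (\<lambda>j. resid (pairing X (z j) (w i)) (c j))))"
  unfolding le_fun_def pairing_Wh_le_iff by (auto simp: Min_ge_iff)

lemma Greatest_Wspace_repr:
  assumes P_iff: "\<And>lam. P (Wh w lam) \<longleftrightarrow> lam \<le> mu"
    and v_def: "v = (GREATEST u. u \<in> Wspace w \<and> P u)"
  shows "v = Wh w mu"
    and "v = Wh w lam \<Longrightarrow> lam \<le> mu"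
    and "(GREATEST lam. v = Wh w lam) = mu"
proof -
  show v_eq: "v = Wh w mu"
    unfolding v_def by (rule Greatest_equality) (use P_iff in \<open>auto simp: Wspace_def intro: Wh_mono\<close>)
  have repr_le: "lam' \<le> mu" if "v = Wh w lam'" for lam'
    using P_iff[of mu] P_iff[of lam'] that v_eq by simp
  then show "v = Wh w lam \<Longrightarrow> lam \<le> mu" .
  show "(GREATEST lam. v = Wh w lam) = mu"
    by (rule Greatest_equality) (use v_eq repr_le in auto)
qed

theorem proposition3p2:
  fixes X :: "('n::euclidean_space) set" and U :: "('m::euclidean_space) set"
    and l :: "'n \<Rightarrow> 'm \<Rightarrow> real" and f :: "'n \<Rightarrow> 'm \<Rightarrow> 'n"
    and T :: real and N :: nat and \<delta> :: real
    and \<phi> :: "'n \<Rightarrow> ereal"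
    and w :: "'p::finite \<Rightarrow> 'n \<Rightarrow> ereal" and z :: "'q::finite \<Rightarrow> 'n \<Rightarrow> ereal"
    and v :: "nat \<Rightarrow> 'n \<Rightarrow> ereal"
  assumes "T > 0" and "N \<ge> 1" and "\<delta> = T / real N"
    and "\<forall>x. \<phi> x \<noteq> \<infinity>" and "\<forall>i x. w i x \<noteq> \<infinity>" and "\<forall>j x. z j x \<noteq> \<infinity>"
    and "\<forall>x. x \<notin> X \<longrightarrow> \<phi> x = -\<infinity>"
    and "\<forall>i x. x \<notin> X \<longrightarrow> w i x = -\<infinity>"
    and "\<forall>j x. x \<notin> X \<longrightarrow> z j x = -\<infinity>"
    and "v 0 = (GREATEST u. u \<in> Wspace w \<and> u \<le> \<phi>)"
    and "\<forall>k<N. v (Suc k) = (GREATEST u. u \<in> Wspace w \<and>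
            (\<forall>j. pairing X (z j) u \<le> pairing X (z j) (Ssg X U f l \<delta> (v k))))"
  shows "(\<forall>k\<le>N. \<exists>lam. v k = Wh w lam \<and> (\<forall>lam'. v k = Wh w lam' \<longrightarrow> lam' \<le> lam))
    \<and> (GREATEST lam. v 0 = Wh w lam) = Wres X w \<phi>
    \<and> (\<forall>k<N. \<forall>i. (GREATEST lam. v (Suc k) = Wh w lam) i =
          Min (range (\<lambda>j. resid (pairing X (z j) (w i))
                 (pairing X (z j) (Ssg X U f l \<delta> (Wh w (GREATEST lam. v k = Wh w lam)))))))"
proof -
  define mu where "mu k = (\<lambda>i. Min (range (\<lambda>j. resid (pairing X (z j) (w i))
    (pairing X (z j) (Ssg X U f l \<delta> (v k))))))" for k
  note repr_0 = Greatest_Wspace_repr[OF Wh_le_iff_le_Wres[OF assms(8)] assms(10)]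
  have repr_Suc: "v (Suc k) = Wh w (mu k)" "v (Suc k) = Wh w lam' \<Longrightarrow> lam' \<le> mu k"
    "(GREATEST lam. v (Suc k) = Wh w lam) = mu k" if "k < N" for k lam'
    using Greatest_Wspace_repr[OF pairings_Wh_le_iff assms(11)[rule_format, OF that]]
    unfolding mu_def by blast+
  have v_repr: "\<exists>lam. v k = Wh w lam \<and> (\<forall>lam'. v k = Wh w lam' \<longrightarrow> lam' \<le> lam)
      \<and> (GREATEST lam. v k = Wh w lam) = lam" if "k \<le> N" for k
  proof (cases k)
    case 0
    then show ?thesis using repr_0 by blast
  next
    case (Suc k')
    with that have "k' < N" by simp
    with Suc show ?thesis using repr_Suc by blast
  qed
  then have Wh_Greatest: "Wh w (GREATEST lam. v k = Wh w lam) = v k" if "k \<le> N" for k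
    using that by force
  have "\<forall>k\<le>N. \<exists>lam. v k = Wh w lam \<and> (\<forall>lam'. v k = Wh w lam' \<longrightarrow> lam' \<le> lam)"
    using v_repr by blast
  with repr_0(3) repr_Suc(3) Wh_Greatest show ?thesis
    by (simp add: mu_def)
qed

end
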